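(* Let $r>2$, $p(z_1,z_2)=1-\frac{z_1+z_2}{r}$, and define the Hermitian form $$\langle g,h\rangle=\frac1{4\pi^2}\int_0^{2\pi}\!\!\int_0^{2\pi}\frac{g(e^{i\theta},e^{i\phi})\overline{h(e^{i\theta},e^{i\phi})}}{|p(e^{i\theta},e^{i\phi})|^2}\,d\theta\,d\phi$$ for square-integrable functions $g,h$ on $\mathbb{T}^2$. Let $a=\frac r2-\sqrt{\frac{r^2}{4}-1}$. Then the polynomials $$\sqrt[4]{1-\tfrac4{r^2}},\qquad z_1^k\frac{\sqrt[4]{1-\frac4{r^2}}}{\sqrt{1-a^2}}(z_1-a)\ (k\in\mathbb{Z}_+),\qquad z_2^k\frac{\sqrt[4]{1-\frac4{r^2}}}{\sqrt{1-a^2}}(z_2-a)\ (k\in\mathbb{Z}_+),$$ $$z_1^{k_1}z_2^{k_2}\left(z_1z_2-\frac{z_1}{r}-\frac{z_2}{r}\right)\ ((k_1,k_2)\in\mathbb{Z}_+^2)$$ form a complete set of orthonormal polynomials with respect to $\langle\cdot,\cdot\rangle$ (they are orthonormal and their linear span is the space of all polynomials in $z_1,z_2$).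
   Context: $\mathbb{Z}_+=\{0,1,2,\dots\}$; $\mathbb{T}^2=\{(z_1,z_2):|z_1|=|z_2|=1\}$. *)

theory Defs
  imports "HOL-Analysis.Analysis"
begin

definition pden :: "real \<Rightarrow> complex \<times> complex \<Rightarrow> complex" where
  "pden r z = 1 - (fst z + snd z) / complex_of_real r"

definition herm :: "real \<Rightarrow> (complex \<times> complex \<Rightarrow> complex) \<Rightarrow> (complex \<times> complex \<Rightarrow> complex) \<Rightarrow> complex" where
  "herm r g h = complex_of_real (1 / (4 * pi^2)) *
     integral (cbox (0,0) (2*pi, 2*pi))
       (\<lambda>(\<theta>::real, \<phi>::real).
          g (cis \<theta>, cis \<phi>) * cnj (h (cis \<theta>, cis \<phi>))
          / complex_of_real ((cmod (pden r (cis \<theta>, cis \<phi>)))^2))"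

definition poly2_space :: "(complex \<times> complex \<Rightarrow> complex) set" where
  "poly2_space = {f. \<exists>S c. finite S \<and>
      f = (\<lambda>z. \<Sum>(k1,k2)\<in>S. c (k1,k2) * fst z ^ k1 * snd z ^ k2)}"

definition fspan :: "('i \<Rightarrow> complex \<times> complex \<Rightarrow> complex) \<Rightarrow> (complex \<times> complex \<Rightarrow> complex) set" where
  "fspan F = {f. \<exists>I c. finite I \<and> f = (\<lambda>z. \<Sum>i\<in>I. c i * F i z)}"

datatype idx = Cst | Ione nat | Itwo nat | Iboth nat nat

definition aval :: "real \<Rightarrow> real" where
  "aval r = r / 2 - sqrt (r^2 / 4 - 1)"

definition ofam :: "real \<Rightarrow> idx \<Rightarrow> complex \<times> complex \<Rightarrow> complex" where
  "ofam r i = (case i of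
      Cst \<Rightarrow> (\<lambda>z. complex_of_real (root 4 (1 - 4 / r^2)))
    | Ione k \<Rightarrow> (\<lambda>z. fst z ^ k *
          complex_of_real (root 4 (1 - 4 / r^2) / sqrt (1 - (aval r)^2)) *
          (fst z - complex_of_real (aval r)))
    | Itwo k \<Rightarrow> (\<lambda>z. snd z ^ k *
          complex_of_real (root 4 (1 - 4 / r^2) / sqrt (1 - (aval r)^2)) *
          (snd z - complex_of_real (aval r)))
    | Iboth k1 k2 \<Rightarrow> (\<lambda>z. fst z ^ k1 * snd z ^ k2 *
          (fst z * snd z - fst z / complex_of_real r - snd z / complex_of_real r)))"

end

(*
  Integrate first over the second variable. For |B| > 1 the function w |-> |B - w|^-2 on the unit
  circle is a multiple of a Poisson kernel, so its Fourier coefficients are geometric; with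
  B = r - z this gives

    int_0^2pi conj(w)^n / |p(z, w)|^2 dphi = 2 pi * r a / |z - a|^2 * (r - z)^-n,   w = e^(i phi),

  where a is the root in (0, 1) of a^2 - r a + 1 = 0. Inner products of a function of z1 with a
  function of z1 times a power of z2 therefore reduce to integrals over the circle against
  r a / |z - a|^2, itself a Poisson kernel. This settles the constant and the family in z1 (the
  family in z2 follows by the symmetry z1 <-> z2), and also the mixed pairs, where on the circle the
  z1-integrand becomes z^(k+1) / (1 - a z) times a function holomorphic on a disc of radius > 1.

  On the torus z1^k1 z2^k2 (z1 z2 - z1/r - z2/r) = z1^(k1+1) z2^(k2+1) conj(p), so against the last
  family the weight cancels: these functions are orthonormal like monomials, and orthogonal to every
  function of z1 because w^(k2+1) / p(z, w) is holomorphic in w and vanishes at 0.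

  Completeness is triangular: modulo monomials of lower degree, each monomial z1^k1 z2^k2 is a
  multiple of a member of the family.
*)

theory Submission
  imports Defs "HOL-Complex_Analysis.Complex_Analysis"
begin

section \<open>Mean values over the unit circle\<close>

lemma cnj_unit_circle: "cmod z = 1 \<Longrightarrow> cnj z = 1 / z"
  using complex_div_cnj[of 1 z] by simp

lemma circle_mean_holomorphic:
  fixes f :: "complex \<Rightarrow> complex"
  assumes hol: "f holomorphic_on ball 0 R" and R: "1 < R"
  shows "((\<lambda>t. f (cis t)) has_integral 2 * pi * f 0) {0..2*pi}"
proof -
  have sub: "cball (0::complex) 1 \<subseteq> ball 0 R" using R by auto
  have "continuous_on (cball 0 1) f"
    using holomorphic_on_imp_continuous_on holomorphic_on_subset[OF hol sub] by blast
  moreover have "f holomorphic_on ball 0 1"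
    using holomorphic_on_subset[OF hol] sub ball_subset_cball by blast
  ultimately have "((\<lambda>u. f u / (u - 0)) has_contour_integral 2 * of_real pi * \<i> * f 0) (circlepath 0 1)"
    by (rule Cauchy_integral_circlepath) simp
  then have "((\<lambda>t. \<i> * f (cis t)) has_integral 2 * pi * \<i> * f 0) {0..2*pi}"
    unfolding circlepath_def
    by (subst (asm) has_contour_integral_part_circlepath_iff) (auto elim: has_integral_eq[rotated])
  from has_integral_mult_right[OF this, of "-\<i>"] show ?thesis by (simp add: mult_ac)
qed

lemma circle_mean_cnj_holomorphic:
  fixes f :: "complex \<Rightarrow> complex"
  assumes "f holomorphic_on ball 0 R" "1 < R"
  shows "((\<lambda>t. cnj (f (cis t))) has_integral 2 * pi * cnj (f 0)) {0..2*pi}"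
  using has_integral_cnj[THEN iffD2, OF circle_mean_holomorphic[OF assms]] by (simp add: o_def)

lemma circle_mean_monomial:
  "((\<lambda>t. cis t ^ k * cnj (cis t) ^ j) has_integral (if k = j then 2 * pi else 0)) {0..2*pi}"
proof -
  have hol: "(\<lambda>z::complex. z ^ m) holomorphic_on ball 0 2" for m
    by (intro holomorphic_intros)
  have unit: "cis t * cnj (cis t) = 1" for t
    by (simp add: cis_cnj cis_mult)
  show ?thesis
  proof (cases "j \<le> k")
    case True
    then obtain m where k: "k = j + m" using le_Suc_ex by blast
    have eq: "cis t ^ k * cnj (cis t) ^ j = cis t ^ m" for t
      by (simp add: k power_add power_mult_distrib[symmetric] unit mult_ac)
    show ?thesis
      unfolding eq using circle_mean_holomorphic[OF hol, of m] by (cases m) (auto simp: k)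
  next
    case False
    then obtain m where j: "j = k + Suc m" using less_imp_Suc_add by (metis add_Suc_right not_le)
    have "cis t ^ k * cnj (cis t) ^ j = (cis t * cnj (cis t)) ^ k * cnj (cis t) ^ Suc m" for t
      unfolding j power_add power_mult_distrib by (simp only: mult_ac)
    then have eq: "cis t ^ k * cnj (cis t) ^ j = cnj (cis t ^ Suc m)" for t
      by (simp add: unit del: power_Suc)
    show ?thesis
      unfolding eq using circle_mean_cnj_holomorphic[OF hol, of "Suc m"] by (simp add: j)
  qed
qed

lemma one_minus_mult_nonzero_on_ball:
  fixes c :: complex
  assumes "cmod c < 1"
  obtains R where "1 < R" "\<And>w. w \<in> ball 0 R \<Longrightarrow> 1 - c * w \<noteq> 0"
proof
  define R where "R = 2 / (1 + cmod c)"
  have pos: "0 < 1 + cmod c" by (simp add: add_pos_nonneg)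
  show "1 < R" using assms pos unfolding R_def by (simp add: pos_less_divide_eq)
  fix w :: complex assume "w \<in> ball 0 R"
  then have "cmod (c * w) \<le> cmod c * R" by (simp add: norm_mult mult_left_mono)
  also have "\<dots> < 1" using assms pos unfolding R_def by (simp add: pos_divide_less_eq)
  finally show "1 - c * w \<noteq> 0" by auto
qed

lemma circle_geometric_moment:
  fixes c :: complex
  assumes c: "cmod c < 1"
  shows "((\<lambda>t. cnj (cis t) ^ n / (1 - c * cis t)) has_integral 2 * pi * c ^ n) {0..2*pi}"
proof (induction n)
  case 0
  obtain R where R: "1 < R" "\<And>w. w \<in> ball 0 R \<Longrightarrow> 1 - c * w \<noteq> 0"
    using one_minus_mult_nonzero_on_ball[OF c] by blast
  have "(\<lambda>z. 1 / (1 - c * z)) holomorphic_on ball 0 R"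
    using R(2) by (intro holomorphic_intros) auto
  then show ?case
    using circle_mean_holomorphic[OF _ R(1)] by fastforce
next
  case (Suc n)
  have nz: "1 - c * cis t \<noteq> 0" for t
    using c by (auto simp: norm_mult dest!: arg_cong[of _ _ cmod])
  have split: "cnj (cis t) ^ Suc n / (1 - c * cis t) =
      cis t ^ 0 * cnj (cis t) ^ Suc n + c * (cnj (cis t) ^ n / (1 - c * cis t))" for t
    using nz[of t] by (simp add: field_simps cnj_unit_circle)
  show ?case
    unfolding split
    using has_integral_add[OF circle_mean_monomial[of 0 "Suc n"] has_integral_mult_right[OF Suc.IH, of c]]
    by (simp add: mult_ac)
qed

lemma poisson_kernel_identity:
  fixes u :: complex
  assumes "u \<noteq> 1"
  shows "1 / (1 - u) + cnj (1 / (1 - u)) - 1 = of_real ((1 - (cmod u)\<^sup>2) / (cmod (1 - u))\<^sup>2)"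
proof -
  have nz: "1 - u \<noteq> 0" "1 - cnj u \<noteq> 0"
    using assms by (auto simp: complex_eq_iff)
  have rhs: "of_real ((1 - (cmod u)\<^sup>2) / (cmod (1 - u))\<^sup>2) = (1 - u * cnj u) / ((1 - u) * (1 - cnj u))"
    by (simp only: of_real_divide of_real_diff of_real_1 complex_norm_square complex_cnj_diff complex_cnj_one)
  have "(1 - u) * (1 - cnj u) = 1 + u * cnj u - (u + cnj u)"
    by (simp add: algebra_simps)
  with nz have "1 + u * cnj u - (u + cnj u) \<noteq> 0"
    by (metis mult_eq_0_iff)
  with nz show ?thesis
    unfolding rhs by (simp add: field_simps)
qed

lemma circle_poisson_moment:
  fixes c :: complex
  assumes c: "cmod c < 1"
  shows "((\<lambda>t. cnj (cis t) ^ n * of_real ((1 - (cmod c)\<^sup>2) / (cmod (1 - c * cis t))\<^sup>2))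
           has_integral 2 * pi * c ^ n) {0..2*pi}"
proof -
  obtain R where R: "1 < R" "\<And>w. w \<in> ball 0 R \<Longrightarrow> 1 - c * w \<noteq> 0"
    using one_minus_mult_nonzero_on_ball[OF c] by blast
  have hol: "(\<lambda>z. z ^ n / (1 - c * z)) holomorphic_on ball 0 R"
    using R(2) by (intro holomorphic_intros) auto
  have ne1: "c * cis t \<noteq> 1" for t
    using R(1) R(2)[of "cis t"] by auto
  have split: "cnj (cis t) ^ n * of_real ((1 - (cmod c)\<^sup>2) / (cmod (1 - c * cis t))\<^sup>2) =
      cnj (cis t) ^ n / (1 - c * cis t) + cnj (cis t ^ n / (1 - c * cis t)) - cis t ^ 0 * cnj (cis t) ^ n"
    for t
  proof -
    have "cnj (cis t) ^ n * of_real ((1 - (cmod c)\<^sup>2) / (cmod (1 - c * cis t))\<^sup>2) =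
        cnj (cis t) ^ n * (1 / (1 - c * cis t) + cnj (1 / (1 - c * cis t)) - 1)"
      unfolding poisson_kernel_identity[OF ne1] by (simp add: norm_mult)
    then show ?thesis
      by (simp add: ring_distribs)
  qed
  show ?thesis
    unfolding split
    using has_integral_diff[OF has_integral_add[OF circle_geometric_moment[OF c, of n]
          circle_mean_cnj_holomorphic[OF hol R(1)]] circle_mean_monomial[of 0 n]]
    by (cases n) simp_all
qed

lemma circle_moment_kernel_multiple:
  assumes kernel: "\<And>t. 1 / (D t)\<^sup>2 = K * P t"
    and moment: "((\<lambda>t. cnj (cis t) ^ n * of_real (P t)) has_integral I) {0..2*pi}"
  shows "((\<lambda>t. cnj (cis t) ^ n / of_real ((D t)\<^sup>2)) has_integral of_real K * I) {0..2*pi}"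
proof -
  have "cnj (cis t) ^ n / of_real ((D t)\<^sup>2) = of_real K * (cnj (cis t) ^ n * of_real (P t))" for t
  proof -
    have "cnj (cis t) ^ n / of_real ((D t)\<^sup>2) = cnj (cis t) ^ n * of_real (1 / (D t)\<^sup>2)"
      by (simp add: of_real_divide)
    then show ?thesis
      unfolding kernel of_real_mult by (simp only: mult_ac)
  qed
  then show ?thesis
    using has_integral_mult_right[OF moment, where c = "of_real K"] by simp
qed

lemma circle_moment_inverse_dist_sq_outside:
  fixes B :: complex
  assumes B: "1 < cmod B"
  shows "((\<lambda>t. cnj (cis t) ^ n / of_real ((cmod (B - cis t))\<^sup>2))
           has_integral 2 * pi / (of_real ((cmod B)\<^sup>2 - 1) * B ^ n)) {0..2*pi}"
proof -
  define c where "c = 1 / B"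
  have c: "cmod c < 1"
    using B by (simp add: c_def norm_divide divide_less_eq_1)
  have B0: "B \<noteq> 0"
    using B by auto
  have B2: "1 < (cmod B)\<^sup>2"
    using B by (simp add: one_less_power)
  have kernel: "1 / (cmod (B - cis t))\<^sup>2 =
      1 / ((cmod B)\<^sup>2 - 1) * ((1 - (cmod c)\<^sup>2) / (cmod (1 - c * cis t))\<^sup>2)" for t
  proof -
    have "1 - c * cis t = (B - cis t) / B"
      using B0 by (simp add: c_def field_simps)
    then have "cmod (1 - c * cis t) = cmod (B - cis t) / cmod B"
      by (simp add: norm_divide)
    moreover have "cmod (B - cis t) \<noteq> 0"
      using B by auto
    ultimately have "(1 - (cmod c)\<^sup>2) / (cmod (1 - c * cis t))\<^sup>2 = ((cmod B)\<^sup>2 - 1) / (cmod (B - cis t))\<^sup>2"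
      using B0 by (simp add: c_def norm_divide power_divide field_simps)
    then show ?thesis
      using B2 by simp
  qed
  have total: "of_real (1 / ((cmod B)\<^sup>2 - 1)) * (2 * pi * c ^ n) = 2 * pi / (of_real ((cmod B)\<^sup>2 - 1) * B ^ n)"
    by (simp add: c_def power_one_over of_real_divide)
  show ?thesis
    using circle_moment_kernel_multiple[OF kernel circle_poisson_moment[OF c, of n]] unfolding total .
qed

lemma circle_moment_inverse_dist_sq_inside:
  fixes A :: complex
  assumes A: "cmod A < 1"
  shows "((\<lambda>t. cnj (cis t) ^ n / of_real ((cmod (cis t - A))\<^sup>2))
           has_integral 2 * pi * cnj A ^ n / of_real (1 - (cmod A)\<^sup>2)) {0..2*pi}"
proof -
  have c: "cmod (cnj A) < 1"
    using A by simp
  have A2: "(cmod A)\<^sup>2 < 1"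
    using A by (simp add: power_less_one_iff)
  have dist: "cmod (1 - cnj A * cis t) = cmod (cis t - A)" for t
  proof -
    have "1 - cnj A * cis t = cnj (cnj (cis t) * (cis t - A))"
      by (simp add: algebra_simps cis_cnj cis_mult)
    then show ?thesis
      by (simp only: complex_mod_cnj norm_mult) simp
  qed
  have kernel: "1 / (cmod (cis t - A))\<^sup>2 =
      1 / (1 - (cmod A)\<^sup>2) * ((1 - (cmod (cnj A))\<^sup>2) / (cmod (1 - cnj A * cis t))\<^sup>2)" for t
    using A2 by (simp add: dist)
  show ?thesis
    using circle_moment_kernel_multiple[OF kernel circle_poisson_moment[OF c]] by (simp add: of_real_divide)
qed

section \<open>Finite linear combinations\<close>

lemma fspan_generator: "F i \<in> fspan F"
  unfolding fspan_def by (intro CollectI exI[of _ "{i}"] exI[of _ "\<lambda>_. 1"]) simp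

lemma fspan_zero: "(\<lambda>z. 0) \<in> fspan F"
  unfolding fspan_def by (intro CollectI exI[of _ "{}"]) simp

lemma fspan_scale:
  assumes "f \<in> fspan F"
  shows "(\<lambda>z. a * f z) \<in> fspan F"
proof -
  obtain I c where "finite I" "f = (\<lambda>z. \<Sum>i\<in>I. c i * F i z)"
    using assms unfolding fspan_def by blast
  then show ?thesis
    unfolding fspan_def
    by (intro CollectI exI[of _ I] exI[of _ "\<lambda>i. a * c i"]) (simp add: sum_distrib_left mult.assoc)
qed

lemma fspan_add:
  assumes "f \<in> fspan F" "g \<in> fspan F"
  shows "(\<lambda>z. f z + g z) \<in> fspan F"
proof -
  obtain I c where I: "finite I" and f: "f = (\<lambda>z. \<Sum>i\<in>I. c i * F i z)"
    using assms(1) unfolding fspan_def by blast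
  obtain J d where J: "finite J" and g: "g = (\<lambda>z. \<Sum>i\<in>J. d i * F i z)"
    using assms(2) unfolding fspan_def by blast
  let ?e = "\<lambda>i. (if i \<in> I then c i else 0) + (if i \<in> J then d i else 0)"
  have "(\<Sum>i\<in>I \<union> J. ?e i * F i z) = (\<Sum>i\<in>I. c i * F i z) + (\<Sum>i\<in>J. d i * F i z)" for z
  proof -
    have "(\<Sum>i\<in>I \<union> J. ?e i * F i z) =
        (\<Sum>i\<in>I \<union> J. if i \<in> I then c i * F i z else 0) + (\<Sum>i\<in>I \<union> J. if i \<in> J then d i * F i z else 0)"
      unfolding sum.distrib[symmetric] by (rule sum.cong) (auto simp: distrib_right)
    also have "\<dots> = (\<Sum>i\<in>I. c i * F i z) + (\<Sum>i\<in>J. d i * F i z)"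
      using I J by (simp add: sum.inter_restrict[symmetric] Int_absorb1 Int_absorb2)
    finally show ?thesis .
  qed
  then show ?thesis
    unfolding fspan_def using I J f g by (intro CollectI exI[of _ "I \<union> J"] exI[of _ ?e]) auto
qed

lemma fspan_sum:
  assumes "finite S" "\<And>s. s \<in> S \<Longrightarrow> f s \<in> fspan F"
  shows "(\<lambda>z. \<Sum>s\<in>S. f s z) \<in> fspan F"
  using assms by (induction S rule: finite_induct) (auto intro: fspan_zero fspan_add)

lemma fspan_subset:
  assumes "\<And>i. F i \<in> fspan G"
  shows "fspan F \<subseteq> fspan G"
proof
  fix f assume "f \<in> fspan F"
  then obtain I c where "finite I" "f = (\<lambda>z. \<Sum>i\<in>I. c i * F i z)"
    unfolding fspan_def by blast
  then show "f \<in> fspan G"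
    using fspan_sum[of I "\<lambda>i z. c i * F i z" G] fspan_scale[OF assms] by simp
qed

lemma fspan_powers:
  assumes "F i = (\<lambda>z. c)" "c \<noteq> 0" "d \<noteq> 0" "\<And>k. F (J k) = (\<lambda>z. p z ^ k * d * (p z - b))"
  shows "(\<lambda>z. p z ^ k) \<in> fspan F"
proof (induction k)
  case 0
  show ?case
    using fspan_scale[OF fspan_generator, of "1 / c" F i] assms(1,2) by simp
next
  case (Suc k)
  have "(\<lambda>z. 1 / d * F (J k) z + b * p z ^ k) \<in> fspan F"
    by (intro fspan_add fspan_scale fspan_generator Suc.IH)
  then show ?case
    using assms(3,4) by (simp add: field_simps)
qed

definition monom2 :: "nat \<times> nat \<Rightarrow> complex \<times> complex \<Rightarrow> complex" where
  "monom2 p z = fst z ^ fst p * snd z ^ snd p"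

lemma poly2_space_eq_fspan_monom2: "poly2_space = fspan monom2"
  unfolding poly2_space_def fspan_def monom2_def by (simp add: case_prod_unfold mult.assoc)

section \<open>The family and the Hermitian form\<close>

definition ofam_const :: "real \<Rightarrow> real" where
  "ofam_const r = root 4 (1 - 4 / r\<^sup>2)"

definition ofam_coeff :: "real \<Rightarrow> real" where
  "ofam_coeff r = ofam_const r / sqrt (1 - (aval r)\<^sup>2)"

lemma ofam_simps:
  "ofam r Cst = (\<lambda>z. of_real (ofam_const r))"
  "ofam r (Ione k) = (\<lambda>z. fst z ^ k * of_real (ofam_coeff r) * (fst z - of_real (aval r)))"
  "ofam r (Itwo k) = (\<lambda>z. snd z ^ k * of_real (ofam_coeff r) * (snd z - of_real (aval r)))"
  "ofam r (Iboth k1 k2) = (\<lambda>z. fst z ^ k1 * snd z ^ k2 *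
      (fst z * snd z - fst z / of_real r - snd z / of_real r))"
  by (simp_all add: ofam_def ofam_const_def ofam_coeff_def)

lemma continuous_on_power_times_linear: "continuous_on UNIV (\<lambda>u::complex. u ^ k * c * (u - b))"
  by (intro continuous_intros)

primrec idx_swap :: "idx \<Rightarrow> idx" where
  "idx_swap Cst = Cst"
| "idx_swap (Ione k) = Itwo k"
| "idx_swap (Itwo k) = Ione k"
| "idx_swap (Iboth k1 k2) = Iboth k2 k1"

lemma ofam_idx_swap: "ofam r (idx_swap i) = (\<lambda>z. ofam r i (snd z, fst z))"
  by (cases i) (simp_all add: ofam_simps fun_eq_iff algebra_simps)

lemma pden_nonzero:
  assumes "cmod z + cmod w < r"
  shows "pden r (z, w) \<noteq> 0"
proof
  assume "pden r (z, w) = 0"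
  moreover have "r \<noteq> 0"
    using assms norm_ge_zero[of z] norm_ge_zero[of w] by linarith
  ultimately have "z + w = of_real r"
    by (simp add: pden_def field_simps)
  then have "r \<le> cmod z + cmod w"
    using norm_triangle_ineq[of z w] by simp
  with assms show False by simp
qed

lemma norm_pden:
  assumes "0 < r"
  shows "cmod (pden r (z, w)) = cmod (of_real r - z - w) / r"
proof -
  have "pden r (z, w) = (of_real r - z - w) / of_real r"
    using assms by (simp add: pden_def field_simps)
  then show ?thesis
    using assms by (simp add: norm_divide)
qed

lemma norm_real_minus_unit_sq:
  fixes z :: complex
  assumes "cmod z = 1"
  shows "(cmod (of_real x - z))\<^sup>2 = x\<^sup>2 - 2 * x * Re z + 1"
proof -
  have "(Re z)\<^sup>2 + (Im z)\<^sup>2 = 1"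
    using assms cmod_power2[of z] by simp
  then show ?thesis
    by (simp add: cmod_power2 power2_diff)
qed

(* For |z| = 1 this is (1/2pi) int_0^2pi |p(z, e^(i phi))|^-2 dphi, by pden_moment with n = 0. *)
definition marginal_weight :: "real \<Rightarrow> complex \<Rightarrow> real" where
  "marginal_weight r z = r * aval r / (cmod (z - of_real (aval r)))\<^sup>2"

definition herm_integrand ::
    "real \<Rightarrow> (complex \<times> complex \<Rightarrow> complex) \<Rightarrow> (complex \<times> complex \<Rightarrow> complex) \<Rightarrow> real \<Rightarrow> real \<Rightarrow> complex"
  where "herm_integrand r g h \<theta> \<phi> =
    g (cis \<theta>, cis \<phi>) * cnj (h (cis \<theta>, cis \<phi>)) / of_real ((cmod (pden r (cis \<theta>, cis \<phi>)))\<^sup>2)"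

lemma herm_eq_box_integral:
  "herm r g h = of_real (1 / (4 * pi\<^sup>2)) *
    integral (cbox (0, 0) (2*pi, 2*pi)) (\<lambda>x. herm_integrand r g h (fst x) (snd x))"
  by (simp add: herm_def herm_integrand_def case_prod_unfold)

lemma herm_cnj_commute: "herm r g h = cnj (herm r h g)"
  unfolding herm_def by (simp add: integral_cnj case_prod_unfold mult.commute)

section \<open>Orthonormality and completeness\<close>

context
  fixes r :: real
  assumes r: "2 < r"
begin

lemma four_le_r_sq: "4 \<le> r\<^sup>2"
proof -
  have "2\<^sup>2 \<le> r\<^sup>2"
    using r by (intro power_mono) auto
  then show ?thesis by simp
qed

lemma aval_bounds: "0 < aval r" "aval r < 1"
proof -
  define s where "s = sqrt (r\<^sup>2 / 4 - 1)"
  have s2: "s\<^sup>2 = r\<^sup>2 / 4 - 1" and s0: "0 \<le> s"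
    using four_le_r_sq by (auto simp: s_def)
  have "s\<^sup>2 < (r / 2)\<^sup>2"
    using s2 by (simp add: power_divide)
  then have "s < r / 2"
    by (rule power_less_imp_less_base) (use r in auto)
  then show "0 < aval r"
    by (simp add: aval_def s_def)
  have "(r / 2 - 1)\<^sup>2 < s\<^sup>2"
    using s2 r by (simp add: power2_diff power_divide)
  then have "r / 2 - 1 < s"
    using s0 by (rule power_less_imp_less_base)
  then show "aval r < 1"
    by (simp add: aval_def s_def)
qed

lemma aval_sq_less_1: "(aval r)\<^sup>2 < 1"
  using aval_bounds by (simp add: abs_square_less_1)

lemma aval_quadratic: "(aval r)\<^sup>2 + 1 = r * aval r"
proof -
  define s where "s = sqrt (r\<^sup>2 / 4 - 1)"
  have "s\<^sup>2 = r\<^sup>2 / 4 - 1"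
    using four_le_r_sq by (simp add: s_def)
  then show ?thesis
    unfolding aval_def s_def[symmetric] by (simp add: power2_eq_square field_simps)
qed

lemma sqrt_one_minus_four_over_r_sq: "sqrt (1 - 4 / r\<^sup>2) = (1 - (aval r)\<^sup>2) / (r * aval r)"
proof (rule real_sqrt_unique)
  have ra: "(r * aval r)\<^sup>2 = ((aval r)\<^sup>2 + 1)\<^sup>2"
    by (simp add: aval_quadratic)
  have "r * aval r \<noteq> 0"
    using r aval_bounds by simp
  then have "1 - 4 / r\<^sup>2 = ((r * aval r)\<^sup>2 - 4 * (aval r)\<^sup>2) / (r * aval r)\<^sup>2"
    by (simp add: field_simps power2_eq_square)
  also have "\<dots> = (1 - (aval r)\<^sup>2)\<^sup>2 / (r * aval r)\<^sup>2"
    unfolding ra by (simp add: power2_eq_square algebra_simps)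
  finally show "((1 - (aval r)\<^sup>2) / (r * aval r))\<^sup>2 = 1 - 4 / r\<^sup>2"
    by (simp add: power_divide)
  show "0 \<le> (1 - (aval r)\<^sup>2) / (r * aval r)"
    using r aval_bounds by (simp add: power_le_one)
qed

lemma ofam_const_sq: "(ofam_const r)\<^sup>2 * (r * aval r) = 1 - (aval r)\<^sup>2"
proof -
  have nonneg: "0 \<le> 1 - 4 / r\<^sup>2"
    using four_le_r_sq by (simp add: divide_le_eq_1)
  have "((ofam_const r)\<^sup>2)\<^sup>2 = 1 - 4 / r\<^sup>2"
    using nonneg by (simp add: ofam_const_def flip: power_mult)
  then have "(ofam_const r)\<^sup>2 = sqrt (1 - 4 / r\<^sup>2)"
    by (intro real_sqrt_unique[symmetric]) auto
  then show ?thesis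
    using r aval_bounds by (simp add: sqrt_one_minus_four_over_r_sq)
qed

lemma ofam_coeff_sq: "(ofam_coeff r)\<^sup>2 * (r * aval r) = 1"
proof -
  have "0 < 1 - (aval r)\<^sup>2"
    using aval_sq_less_1 by simp
  then show ?thesis
    using ofam_const_sq by (simp add: ofam_coeff_def power_divide)
qed

lemma ofam_const_nonzero: "ofam_const r \<noteq> 0"
  and ofam_coeff_nonzero: "ofam_coeff r \<noteq> 0"
  using ofam_const_sq ofam_coeff_sq aval_sq_less_1 by auto

lemma marginal_weight_eq:
  assumes z: "cmod z = 1"
  shows "r\<^sup>2 / ((cmod (of_real r - z))\<^sup>2 - 1) = marginal_weight r z"
proof -
  have "Re z \<le> 1"
    using z complex_Re_le_cmod[of z] by simp
  then have pos: "0 < r - 2 * Re z"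
    using r by simp
  have "(cmod (of_real r - z))\<^sup>2 - 1 = r * (r - 2 * Re z)"
    using norm_real_minus_unit_sq[OF z] by (simp add: power2_eq_square algebra_simps)
  moreover have "(cmod (z - of_real (aval r)))\<^sup>2 = aval r * (r - 2 * Re z)"
    using norm_real_minus_unit_sq[OF z, of "aval r"] aval_quadratic
    by (simp add: norm_minus_commute power2_eq_square algebra_simps)
  ultimately show ?thesis
    using r pos aval_bounds by (simp add: marginal_weight_def power2_eq_square)
qed

lemma pden_moment:
  fixes z :: complex
  assumes z: "cmod z = 1"
  shows "((\<lambda>\<phi>. cnj (cis \<phi>) ^ n / of_real ((cmod (pden r (z, cis \<phi>)))\<^sup>2))
           has_integral 2 * pi * of_real (marginal_weight r z) / (of_real r - z) ^ n) {0..2*pi}"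
proof -
  define B where "B = of_real r - z"
  have B: "1 < cmod B"
    using norm_triangle_ineq2[of "of_real r" z] z r by (simp add: B_def)
  have integrand: "cnj (cis \<phi>) ^ n / of_real ((cmod (pden r (z, cis \<phi>)))\<^sup>2) =
      of_real (r\<^sup>2) * (cnj (cis \<phi>) ^ n / of_real ((cmod (B - cis \<phi>))\<^sup>2))" for \<phi>
    using r by (simp add: norm_pden B_def power_divide of_real_divide)
  have total: "of_real (r\<^sup>2) * (2 * pi / (of_real ((cmod B)\<^sup>2 - 1) * B ^ n)) =
      2 * pi * of_real (marginal_weight r z) / (of_real r - z) ^ n"
    unfolding marginal_weight_eq[OF z, symmetric] by (simp add: B_def of_real_divide)
  show ?thesis
    using has_integral_mult_right[OF circle_moment_inverse_dist_sq_outside[OF B, of n], where c = "of_real (r\<^sup>2)"]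
    unfolding integrand[symmetric] total .
qed

lemma marginal_weight_moment:
  "((\<lambda>t. cnj (cis t) ^ n * of_real (marginal_weight r (cis t)))
      has_integral 2 * pi * of_real (r * aval r * aval r ^ n / (1 - (aval r)\<^sup>2))) {0..2*pi}"
proof -
  have a: "cmod (of_real (aval r)) < 1"
    using aval_bounds by simp
  have integrand: "cnj (cis t) ^ n * of_real (marginal_weight r (cis t)) =
      of_real (r * aval r) * (cnj (cis t) ^ n / of_real ((cmod (cis t - of_real (aval r)))\<^sup>2))" for t
    by (simp add: marginal_weight_def of_real_divide)
  have total: "of_real (r * aval r) * (2 * pi * cnj (of_real (aval r)) ^ n / of_real (1 - (cmod (of_real (aval r)))\<^sup>2)) =
      2 * pi * of_real (r * aval r * aval r ^ n / (1 - (aval r)\<^sup>2))"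
    by (simp add: of_real_divide)
  show ?thesis
    using has_integral_mult_right[OF circle_moment_inverse_dist_sq_inside[OF a, of n], where c = "of_real (r * aval r)"]
    unfolding integrand[symmetric] total .
qed

lemma unit_circle_aval_nonzero:
  assumes z: "cmod z = 1"
  shows "z - of_real (aval r) \<noteq> 0" "1 - of_real (aval r) * z \<noteq> 0"
proof -
  have "cmod (of_real (aval r) * z) < 1"
    using z aval_bounds by (simp add: norm_mult)
  then show "1 - of_real (aval r) * z \<noteq> 0"
    by auto
  show "z - of_real (aval r) \<noteq> 0"
    using z aval_bounds by auto
qed

lemma marginal_weight_times_diff:
  assumes z: "cmod z = 1"
  shows "(z - of_real (aval r)) * of_real (marginal_weight r z) = of_real (r * aval r) * z / (1 - of_real (aval r) * z)"
proof -
  note nz = unit_circle_aval_nonzero[OF z]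
  have "z \<noteq> 0"
    using z by auto
  then have "cnj (z - of_real (aval r)) = (1 - of_real (aval r) * z) / z"
    using z by (simp add: cnj_unit_circle field_simps)
  then have norm_sq: "of_real ((cmod (z - of_real (aval r)))\<^sup>2) = (z - of_real (aval r)) * ((1 - of_real (aval r) * z) / z)"
    unfolding complex_norm_square by simp
  show ?thesis
    unfolding marginal_weight_def of_real_divide norm_sq using nz by simp
qed

lemma continuous_on_herm_integrand:
  assumes g: "continuous_on UNIV g" and h: "continuous_on UNIV h"
  shows "continuous_on UNIV (\<lambda>x. herm_integrand r g h (fst x) (snd x))"
proof -
  have torus: "continuous_on UNIV (\<lambda>x::real \<times> real. (cis (fst x), cis (snd x)))"
    by (intro continuous_intros)
  have "pden r (cis (fst x), cis (snd x)) \<noteq> 0" for x :: "real \<times> real"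
    using r by (intro pden_nonzero) simp
  then show ?thesis
    unfolding herm_integrand_def pden_def
    using continuous_on_compose2[OF g torus] continuous_on_compose2[OF h torus] r
    by (intro continuous_intros) auto
qed

lemma herm_iterated:
  assumes "continuous_on UNIV g" "continuous_on UNIV h"
  shows "herm r g h = of_real (1 / (4 * pi\<^sup>2)) *
    integral {0..2*pi} (\<lambda>\<theta>. integral {0..2*pi} (\<lambda>\<phi>. herm_integrand r g h \<theta> \<phi>))"
proof -
  have "continuous_on (cbox (0, 0) (2*pi, 2*pi)) (\<lambda>x. herm_integrand r g h (fst x) (snd x))"
    using continuous_on_herm_integrand[OF assms] by (rule continuous_on_subset) simp
  from integral_prod_continuous[OF this] show ?thesis
    unfolding herm_eq_box_integral by (simp add: cbox_interval)
qed

lemma herm_eqI: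
  assumes "continuous_on UNIV g" "continuous_on UNIV h"
    and inner: "\<And>\<theta>. ((\<lambda>\<phi>. herm_integrand r g h \<theta> \<phi>) has_integral F \<theta>) {0..2*pi}"
    and outer: "(F has_integral V) {0..2*pi}"
  shows "herm r g h = V / (4 * pi\<^sup>2)"
proof -
  have "integral {0..2*pi} (\<lambda>\<theta>. integral {0..2*pi} (\<lambda>\<phi>. herm_integrand r g h \<theta> \<phi>)) = V"
    using integral_unique[OF inner] integral_unique[OF outer] by simp
  then show ?thesis
    unfolding herm_iterated[OF assms(1,2)] by (simp add: of_real_divide)
qed

lemma herm_swap_variables:
  assumes g: "continuous_on UNIV g" and h: "continuous_on UNIV h"
  shows "herm r (\<lambda>z. g (snd z, fst z)) (\<lambda>z. h (snd z, fst z)) = herm r g h"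
proof -
  have swap: "continuous_on UNIV (\<lambda>z::complex \<times> complex. (snd z, fst z))"
    by (intro continuous_intros)
  have g': "continuous_on UNIV (\<lambda>z. g (snd z, fst z))" and h': "continuous_on UNIV (\<lambda>z. h (snd z, fst z))"
    using continuous_on_compose2[OF g swap] continuous_on_compose2[OF h swap] by auto
  have swapped: "herm_integrand r (\<lambda>z. g (snd z, fst z)) (\<lambda>z. h (snd z, fst z)) \<theta> \<phi> = herm_integrand r g h \<phi> \<theta>"
    for \<theta> \<phi>
    by (simp add: herm_integrand_def pden_def add.commute)
  have "continuous_on UNIV (\<lambda>x. herm_integrand r g h (snd x) (fst x))"
    using continuous_on_herm_integrand[OF g' h'] by (simp only: swapped)
  then have "continuous_on (cbox (0, 0) (2*pi, 2*pi)) (\<lambda>(\<theta>, \<phi>). herm_integrand r g h \<phi> \<theta>)"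
    unfolding case_prod_unfold by (rule continuous_on_subset) simp
  from integral_swap_continuous[OF this] show ?thesis
    unfolding herm_iterated[OF g h] herm_iterated[OF g' h'] swapped by (simp add: cbox_interval)
qed

lemma herm_lincomb_right:
  assumes g: "continuous_on UNIV g" and h1: "continuous_on UNIV h1" and h2: "continuous_on UNIV h2"
  shows "herm r g (\<lambda>z. c * h1 z + d * h2 z) = cnj c * herm r g h1 + cnj d * herm r g h2"
proof -
  let ?box = "cbox (0, 0) (2*pi, 2*pi) :: (real \<times> real) set"
  have integrable: "(\<lambda>x. herm_integrand r g h (fst x) (snd x)) integrable_on ?box"
    if "continuous_on UNIV h" for h
    using continuous_on_subset[OF continuous_on_herm_integrand[OF g that] subset_UNIV]
    by (rule integrable_continuous)
  have "herm_integrand r g (\<lambda>z. c * h1 z + d * h2 z) \<theta> \<phi> =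
      cnj c * herm_integrand r g h1 \<theta> \<phi> + cnj d * herm_integrand r g h2 \<theta> \<phi>" for \<theta> \<phi>
    by (simp add: herm_integrand_def algebra_simps add_divide_distrib)
  then show ?thesis
    using integrable[OF h1] integrable[OF h2]
    unfolding herm_eq_box_integral
    by (simp add: integral_add integrable_on_mult_right algebra_simps)
qed

lemma herm_fst_snd_power:
  assumes G: "continuous_on UNIV G" and H: "continuous_on UNIV H"
    and V: "((\<lambda>t. G (cis t) * cnj (H (cis t)) * of_real (marginal_weight r (cis t)) / (of_real r - cis t) ^ n)
              has_integral V) {0..2*pi}"
  shows "herm r (\<lambda>z. G (fst z)) (\<lambda>z. H (fst z) * snd z ^ n) = V / (2 * pi)"
proof -
  have "continuous_on UNIV (\<lambda>z::complex \<times> complex. G (fst z))"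
    "continuous_on UNIV (\<lambda>z::complex \<times> complex. H (fst z) * snd z ^ n)"
    using continuous_on_compose2[OF G continuous_on_fst[OF continuous_on_id]]
      continuous_on_compose2[OF H continuous_on_fst[OF continuous_on_id]]
    by (auto intro!: continuous_intros)
  moreover have "((\<lambda>\<phi>. herm_integrand r (\<lambda>z. G (fst z)) (\<lambda>z. H (fst z) * snd z ^ n) \<theta> \<phi>) has_integral
      2 * pi * (G (cis \<theta>) * cnj (H (cis \<theta>)) * of_real (marginal_weight r (cis \<theta>)) / (of_real r - cis \<theta>) ^ n))
      {0..2*pi}" for \<theta>
    using has_integral_mult_right[OF pden_moment[OF norm_cis[of \<theta>], where n = n], where c = "G (cis \<theta>) * cnj (H (cis \<theta>))"]
    by (simp add: herm_integrand_def mult_ac)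
  moreover have "((\<lambda>\<theta>. 2 * pi * (G (cis \<theta>) * cnj (H (cis \<theta>)) * of_real (marginal_weight r (cis \<theta>)) /
      (of_real r - cis \<theta>) ^ n)) has_integral 2 * pi * V) {0..2*pi}"
    by (rule has_integral_mult_right[OF V])
  ultimately show ?thesis
    by (subst herm_eqI) (auto simp: power2_eq_square)
qed

lemma continuous_on_ofam: "continuous_on UNIV (ofam r i)"
  using r by (cases i) (auto simp: ofam_simps intro!: continuous_intros)

lemma herm_Cst_Cst: "herm r (ofam r Cst) (ofam r Cst) = 1"
proof -
  let ?c = "of_real (ofam_const r) :: complex"
  let ?m = "r * aval r * aval r ^ 0 / (1 - (aval r)\<^sup>2)"
  have "?c * cnj ?c * (2 * pi * of_real ?m) = 2 * pi * of_real ((ofam_const r)\<^sup>2 * ?m)"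
    by (simp add: power2_eq_square mult_ac)
  also have "(ofam_const r)\<^sup>2 * ?m = 1"
    using ofam_const_sq aval_sq_less_1 by simp
  finally have "((\<lambda>t. ?c * cnj ?c * of_real (marginal_weight r (cis t)) / (of_real r - cis t) ^ 0)
      has_integral 2 * pi) {0..2*pi}"
    using has_integral_mult_right[OF marginal_weight_moment[of 0], where c = "?c * cnj ?c"]
    by (simp add: mult.assoc)
  from herm_fst_snd_power[OF _ _ this] show ?thesis
    by (simp add: ofam_simps)
qed

lemma herm_Cst_Ione: "herm r (ofam r Cst) (ofam r (Ione j)) = 0"
proof -
  let ?C = "of_real (ofam_const r) * of_real (ofam_coeff r) :: complex"
  let ?a = "of_real (aval r) :: complex"
  have "((\<lambda>t. ?C * (cnj (cis t) ^ Suc j * of_real (marginal_weight r (cis t)) -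
      ?a * (cnj (cis t) ^ j * of_real (marginal_weight r (cis t))))) has_integral 0) {0..2*pi}"
    using has_integral_mult_right[OF has_integral_diff[OF marginal_weight_moment[of "Suc j"]
        has_integral_mult_right[OF marginal_weight_moment[of j], where c = ?a]], where c = ?C]
    by (simp add: algebra_simps)
  then have integral: "((\<lambda>t. of_real (ofam_const r) * cnj (cis t ^ j * of_real (ofam_coeff r) * (cis t - ?a)) *
      of_real (marginal_weight r (cis t)) / (of_real r - cis t) ^ 0) has_integral 0) {0..2*pi}"
    by (rule has_integral_eq[rotated]) (simp add: algebra_simps)
  show ?thesis
    using herm_fst_snd_power[OF continuous_on_const continuous_on_power_times_linear integral] by (simp add: ofam_simps)
qed

lemma herm_Ione_Ione: "herm r (ofam r (Ione k)) (ofam r (Ione j)) = (if k = j then 1 else 0)"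
proof -
  let ?a = "of_real (aval r) :: complex"
  have weight: "(cis t - ?a) * cnj (cis t - ?a) * of_real (marginal_weight r (cis t)) = of_real (r * aval r)" for t
    using unit_circle_aval_nonzero[OF norm_cis[of t]] unit_circle_aval_nonzero[OF norm_cis[of "-t"]]
    unfolding marginal_weight_def of_real_divide complex_norm_square by (simp add: cis_cnj)
  have monomial: "((\<lambda>t. of_real ((ofam_coeff r)\<^sup>2 * (r * aval r)) * (cis t ^ k * cnj (cis t) ^ j))
      has_integral (if k = j then 2 * pi else 0)) {0..2*pi}"
    using has_integral_mult_right[OF circle_mean_monomial[of k j], where c = "of_real ((ofam_coeff r)\<^sup>2 * (r * aval r))"]
    by (simp add: ofam_coeff_sq)
  have integrand: "cis t ^ k * of_real (ofam_coeff r) * (cis t - ?a) * cnj (cis t ^ j * of_real (ofam_coeff r) * (cis t - ?a)) *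
      of_real (marginal_weight r (cis t)) / (of_real r - cis t) ^ 0 =
      of_real ((ofam_coeff r)\<^sup>2 * (r * aval r)) * (cis t ^ k * cnj (cis t) ^ j)" for t
  proof -
    have "cis t ^ k * of_real (ofam_coeff r) * (cis t - ?a) * cnj (cis t ^ j * of_real (ofam_coeff r) * (cis t - ?a)) *
        of_real (marginal_weight r (cis t)) / (of_real r - cis t) ^ 0 =
        of_real ((ofam_coeff r)\<^sup>2) * (cis t ^ k * cnj (cis t) ^ j) *
        ((cis t - ?a) * cnj (cis t - ?a) * of_real (marginal_weight r (cis t)))"
      by (simp add: power2_eq_square mult_ac)
    then show ?thesis
      unfolding weight by (simp add: mult_ac)
  qed
  show ?thesis
    using herm_fst_snd_power[OF continuous_on_power_times_linear[of k "of_real (ofam_coeff r)" ?a]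
        continuous_on_power_times_linear[of j "of_real (ofam_coeff r)" ?a], where n = 0] monomial
    unfolding integrand by (simp add: ofam_simps)
qed

lemma inverse_aval_bounds: "1 < 1 / aval r" "1 / aval r < r"
proof -
  have "0 < aval r * aval r"
    using aval_bounds by simp
  then have "1 < r * aval r"
    using aval_quadratic by (simp add: power2_eq_square)
  then show "1 < 1 / aval r" "1 / aval r < r"
    using aval_bounds by (simp_all add: field_simps)
qed

lemma holomorphic_on_ball_inverse_aval:
  "(\<lambda>w::complex. w ^ m / ((1 - of_real (aval r) * w) * (of_real r - w) ^ n)) holomorphic_on ball 0 (1 / aval r)"
proof -
  have "(1 - of_real (aval r) * w) * (of_real r - w) ^ n \<noteq> 0" if "w \<in> ball 0 (1 / aval r)" for w :: complex
  proof -
    have w: "cmod w < 1 / aval r"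
      using that by simp
    then have "cmod (of_real (aval r) * w) < 1"
      using aval_bounds by (simp add: norm_mult field_simps)
    moreover have "cmod w < r"
      using w inverse_aval_bounds by linarith
    ultimately have "of_real (aval r) * w \<noteq> 1" "w \<noteq> of_real r"
      using r by auto
    then show ?thesis
      by simp
  qed
  then show ?thesis
    by (intro holomorphic_intros) auto
qed

lemma herm_Ione_snd_power: "herm r (ofam r (Ione k)) (\<lambda>z. snd z ^ n) = 0"
proof -
  let ?a = "of_real (aval r) :: complex"
  define f where "f w = w ^ Suc k / ((1 - ?a * w) * (of_real r - w) ^ n)" for w
  have "f holomorphic_on ball 0 (1 / aval r)"
    unfolding f_def by (rule holomorphic_on_ball_inverse_aval)
  from has_integral_mult_right[OF circle_mean_holomorphic[OF this inverse_aval_bounds(1)],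
      where c = "of_real (ofam_coeff r * (r * aval r))"]
  have "((\<lambda>t. of_real (ofam_coeff r * (r * aval r)) * f (cis t)) has_integral 0) {0..2*pi}"
    by (simp add: f_def)
  moreover have "of_real (ofam_coeff r * (r * aval r)) * f (cis t) =
      cis t ^ k * of_real (ofam_coeff r) * (cis t - ?a) * cnj 1 * of_real (marginal_weight r (cis t)) /
      (of_real r - cis t) ^ n" for t
  proof -
    have "cis t ^ k * of_real (ofam_coeff r) * (cis t - ?a) * cnj 1 * of_real (marginal_weight r (cis t)) /
        (of_real r - cis t) ^ n =
        of_real (ofam_coeff r) * cis t ^ k * ((cis t - ?a) * of_real (marginal_weight r (cis t))) /
        (of_real r - cis t) ^ n"
      by (simp add: mult_ac)
    then show ?thesis
      unfolding marginal_weight_times_diff[OF norm_cis] f_def by (simp add: mult_ac)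
  qed
  ultimately have integral: "((\<lambda>t. cis t ^ k * of_real (ofam_coeff r) * (cis t - ?a) * cnj 1 *
      of_real (marginal_weight r (cis t)) / (of_real r - cis t) ^ n) has_integral 0) {0..2*pi}"
    by simp
  show ?thesis
    using herm_fst_snd_power[OF continuous_on_power_times_linear continuous_on_const integral] by (simp add: ofam_simps)
qed

lemma herm_Ione_Itwo: "herm r (ofam r (Ione k)) (ofam r (Itwo j)) = 0"
proof -
  have Itwo: "ofam r (Itwo j) = (\<lambda>z. of_real (ofam_coeff r) * snd z ^ Suc j +
      (- of_real (ofam_coeff r * aval r)) * snd z ^ j)"
    by (auto simp: ofam_simps algebra_simps)
  have snd_power: "continuous_on UNIV (\<lambda>z::complex \<times> complex. snd z ^ n)" for n
    by (intro continuous_intros)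
  show ?thesis
    unfolding Itwo herm_lincomb_right[OF continuous_on_ofam snd_power snd_power] herm_Ione_snd_power
    by simp
qed

lemma ofam_Iboth_on_torus:
  assumes z: "cmod z = 1" and w: "cmod w = 1"
  shows "ofam r (Iboth k1 k2) (z, w) = z ^ Suc k1 * w ^ Suc k2 * cnj (pden r (z, w))"
proof -
  have "z \<noteq> 0" "w \<noteq> 0" "of_real r \<noteq> (0 :: complex)"
    using z w r by auto
  then show ?thesis
    by (simp add: ofam_simps pden_def cnj_unit_circle[OF z] cnj_unit_circle[OF w] field_simps)
qed

lemma herm_integrand_Iboth:
  "herm_integrand r (ofam r (Iboth k1 k2)) h \<theta> \<phi> =
    cis \<theta> ^ Suc k1 * cis \<phi> ^ Suc k2 * cnj (h (cis \<theta>, cis \<phi>)) / pden r (cis \<theta>, cis \<phi>)"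
proof -
  have "pden r (cis \<theta>, cis \<phi>) \<noteq> 0"
    using r by (intro pden_nonzero) simp
  then show ?thesis
    unfolding herm_integrand_def ofam_Iboth_on_torus[OF norm_cis norm_cis] complex_norm_square by simp
qed

lemma herm_Iboth_fst:
  assumes H: "continuous_on UNIV H"
  shows "herm r (ofam r (Iboth k1 k2)) (\<lambda>z. H (fst z)) = 0"
proof (rule trans[OF herm_eqI[OF continuous_on_ofam]])
  show "continuous_on UNIV (\<lambda>z::complex \<times> complex. H (fst z))"
    using continuous_on_compose2[OF H continuous_on_fst[OF continuous_on_id]] by auto
  show "((\<lambda>\<phi>. herm_integrand r (ofam r (Iboth k1 k2)) (\<lambda>z. H (fst z)) \<theta> \<phi>) has_integral 0) {0..2*pi}" for \<theta>
  proof -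
    have "pden r (cis \<theta>, w) \<noteq> 0" if "w \<in> ball 0 (r - 1)" for w
      using that by (intro pden_nonzero) simp
    then have "(\<lambda>w. w ^ Suc k2 / pden r (cis \<theta>, w)) holomorphic_on ball 0 (r - 1)"
      unfolding pden_def by (intro holomorphic_intros) auto
    from has_integral_mult_right[OF circle_mean_holomorphic[OF this], where c = "cis \<theta> ^ Suc k1 * cnj (H (cis \<theta>))"]
    show ?thesis
      using r by (simp add: herm_integrand_Iboth mult_ac)
  qed
qed (rule has_integral_0, simp)

lemma herm_Iboth_Iboth:
  "herm r (ofam r (Iboth k1 k2)) (ofam r (Iboth l1 l2)) = (if k1 = l1 \<and> k2 = l2 then 1 else 0)"
proof (rule trans[OF herm_eqI[OF continuous_on_ofam continuous_on_ofam]])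
  have "pden r (cis \<theta>, cis \<phi>) \<noteq> 0" for \<theta> \<phi>
    using r by (intro pden_nonzero) simp
  then have "herm_integrand r (ofam r (Iboth k1 k2)) (ofam r (Iboth l1 l2)) \<theta> \<phi> =
      cis \<theta> ^ Suc k1 * cnj (cis \<theta>) ^ Suc l1 * (cis \<phi> ^ Suc k2 * cnj (cis \<phi>) ^ Suc l2)" for \<theta> \<phi>
    by (simp add: herm_integrand_Iboth ofam_Iboth_on_torus mult_ac)
  then show "((\<lambda>\<phi>. herm_integrand r (ofam r (Iboth k1 k2)) (ofam r (Iboth l1 l2)) \<theta> \<phi>) has_integral
      cis \<theta> ^ Suc k1 * cnj (cis \<theta>) ^ Suc l1 * (if k2 = l2 then 2 * pi else 0)) {0..2*pi}" for \<theta>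
    using has_integral_mult_right[OF circle_mean_monomial[of "Suc k2" "Suc l2"]] by simp
  show "((\<lambda>\<theta>. cis \<theta> ^ Suc k1 * cnj (cis \<theta>) ^ Suc l1 * (if k2 = l2 then 2 * pi else 0)) has_integral
      (if k1 = l1 then 2 * pi else 0) * (if k2 = l2 then 2 * pi else 0)) {0..2*pi}"
    using has_integral_mult_left[OF circle_mean_monomial[of "Suc k1" "Suc l1"]] by simp
qed (simp add: power2_eq_square)

lemma herm_ofam_idx_swap:
  "herm r (ofam r (idx_swap i)) (ofam r (idx_swap j)) = herm r (ofam r i) (ofam r j)"
  unfolding ofam_idx_swap using herm_swap_variables[OF continuous_on_ofam continuous_on_ofam] .

lemma herm_ofam_orthonormal: "herm r (ofam r i) (ofam r j) = (if i = j then 1 else 0)"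
proof -
  have converse: "herm r (ofam r j) (ofam r i) = 0" if "herm r (ofam r i) (ofam r j) = 0" for i j
    using that herm_cnj_commute[of r "ofam r j" "ofam r i"] by simp
  have Iboth_Cst: "herm r (ofam r (Iboth k1 k2)) (ofam r Cst) = 0" for k1 k2
    using herm_Iboth_fst[OF continuous_on_const] by (simp add: ofam_simps)
  have Iboth_Ione: "herm r (ofam r (Iboth k1 k2)) (ofam r (Ione j)) = 0" for k1 k2 j
    using herm_Iboth_fst[OF continuous_on_power_times_linear] by (simp add: ofam_simps)
  have Cst_Itwo: "herm r (ofam r Cst) (ofam r (Itwo j)) = 0" for j
    using herm_ofam_idx_swap[of Cst "Ione j"] herm_Cst_Ione by simp
  have Itwo_Ione: "herm r (ofam r (Itwo k)) (ofam r (Ione j)) = 0" for k j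
    using herm_ofam_idx_swap[of "Ione k" "Itwo j"] herm_Ione_Itwo by simp
  have Iboth_Itwo: "herm r (ofam r (Iboth k1 k2)) (ofam r (Itwo j)) = 0" for k1 k2 j
    using herm_ofam_idx_swap[of "Iboth k2 k1" "Ione j"] Iboth_Ione by simp
  have Itwo_Itwo: "herm r (ofam r (Itwo k)) (ofam r (Itwo j)) = (if k = j then 1 else 0)" for k j
    using herm_ofam_idx_swap[of "Ione k" "Ione j"] herm_Ione_Ione by simp
  note orthogonal = herm_Cst_Ione herm_Ione_Itwo Iboth_Cst Iboth_Ione Cst_Itwo Itwo_Ione Iboth_Itwo
  show ?thesis
    by (cases i; cases j) (simp_all add: herm_Cst_Cst herm_Ione_Ione Itwo_Itwo herm_Iboth_Iboth
        orthogonal orthogonal[THEN converse])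
qed

lemma ofam_in_fspan_monom2: "ofam r i \<in> fspan monom2"
proof -
  have monom: "(\<lambda>z. a * (fst z ^ k1 * snd z ^ k2)) \<in> fspan monom2" for a k1 k2
    using fspan_scale[OF fspan_generator, of a monom2 "(k1, k2)"] by (simp add: monom2_def)
  show ?thesis
  proof (cases i)
    case Cst
    then show ?thesis
      using monom[of _ 0 0] by (simp add: ofam_simps)
  next
    case (Ione k)
    then show ?thesis
      using fspan_add[OF monom monom, of "of_real (ofam_coeff r)" "Suc k" 0 "- of_real (ofam_coeff r * aval r)" k 0]
      by (simp add: ofam_simps algebra_simps)
  next
    case (Itwo k)
    then show ?thesis
      using fspan_add[OF monom monom, of "of_real (ofam_coeff r)" 0 "Suc k" "- of_real (ofam_coeff r * aval r)" 0 k]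
      by (simp add: ofam_simps algebra_simps)
  next
    case (Iboth k1 k2)
    then show ?thesis
      using fspan_add[OF monom fspan_add[OF monom monom], of 1 "Suc k1" "Suc k2"
          "- 1 / of_real r" "Suc k1" k2 "- 1 / of_real r" k1 "Suc k2"]
      by (simp add: ofam_simps algebra_simps diff_divide_distrib)
  qed
qed

lemma monom2_in_fspan_ofam: "monom2 (k1, k2) \<in> fspan (ofam r)"
proof (induction k1 arbitrary: k2)
  case 0
  show ?case
    using fspan_powers[where F = "ofam r" and i = Cst and J = Itwo and p = snd and
        c = "of_real (ofam_const r)" and d = "of_real (ofam_coeff r)" and b = "of_real (aval r)"]
      ofam_const_nonzero ofam_coeff_nonzero
    by (simp add: ofam_simps monom2_def)
next
  case (Suc m1)
  note lower_in_first = Suc.IH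
  show ?case
  proof (induction k2)
    case 0
    show ?case
      using fspan_powers[where F = "ofam r" and i = Cst and J = Ione and p = fst and k = "Suc m1" and
          c = "of_real (ofam_const r)" and d = "of_real (ofam_coeff r)" and b = "of_real (aval r)"]
        ofam_const_nonzero ofam_coeff_nonzero
      by (simp add: ofam_simps monom2_def)
  next
    case (Suc m2)
    have "(\<lambda>z. ofam r (Iboth m1 m2) z + (1 / of_real r * monom2 (Suc m1, m2) z + 1 / of_real r * monom2 (m1, Suc m2) z))
        \<in> fspan (ofam r)"
      by (intro fspan_add fspan_scale fspan_generator Suc.IH lower_in_first)
    then show ?case
      using r by (simp add: ofam_simps monom2_def field_simps)
  qed
qed

lemma fspan_ofam_eq_poly2_space: "fspan (ofam r) = poly2_space"
  unfolding poly2_space_eq_fspan_monom2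
  by (intro equalityI fspan_subset ofam_in_fspan_monom2) (auto intro: monom2_in_fspan_ofam)

end

theorem theorem6:
  fixes r :: real
  assumes "r > 2"
  shows "(\<forall>i j. herm r (ofam r i) (ofam r j) = (if i = j then 1 else 0))
         \<and> fspan (ofam r) = poly2_space"
  using assms by (simp add: herm_ofam_orthonormal fspan_ofam_eq_poly2_space)

end
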